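(* For every $n \in \mathbb{N}$, there is a finite simple digraph $D$ with $\vec{\chi}(D) \geq n$ and $\omega(D) \leq 3$ such that $D$ has no induced directed cycle of odd length at least $5$.
   Context: A digraph is simple if for any two distinct vertices $u,v$ it has at most one of the edges $uv$, $vu$ (and no loops). The underlying undirected graph of a digraph $D$ has vertex set $V(D)$, with $u,v$ adjacent iff $uv$ or $vu$ is an edge of $D$. The clique number $\omega(D)$ of a digraph is the clique number of its underlying undirected graph. A digraph is acyclic if it contains no directed cycle. A $k$-dicoloring of $D$ is a map $f:V(D)\to\{1,\dots,k\}$ such that each color class induces an acyclic subdigraph; the dichromatic number $\vec{\chi}(D)$ is the least $k$ for which a $k$-dicoloring exists. An induced directed cycle is a directed cycle $v_1v_2\cdots v_\ell v_1$ whose vertex set induces in $D$ a subdigraph with exactly the edges $v_iv_{i+1}$ (indices mod $\ell$). *)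

theory Defs
  imports Main
begin

text \<open>A digraph is given by a vertex set V and an edge set E of ordered pairs.
  Vertices are taken from nat (every finite digraph is isomorphic to one on nat).\<close>

definition simple_digraph :: "'a set \<Rightarrow> ('a \<times> 'a) set \<Rightarrow> bool" where
  "simple_digraph V E \<longleftrightarrow> E \<subseteq> V \<times> V \<and> (\<forall>v. (v, v) \<notin> E)
     \<and> (\<forall>u v. (u, v) \<in> E \<longrightarrow> (v, u) \<notin> E)"

definition und_adj :: "('a \<times> 'a) set \<Rightarrow> 'a \<Rightarrow> 'a \<Rightarrow> bool" where
  "und_adj E u v \<longleftrightarrow> (u, v) \<in> E \<or> (v, u) \<in> E"

definition is_clique :: "'a set \<Rightarrow> ('a \<times> 'a) set \<Rightarrow> 'a set \<Rightarrow> bool" where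
  "is_clique V E K \<longleftrightarrow> K \<subseteq> V \<and> (\<forall>u\<in>K. \<forall>v\<in>K. u \<noteq> v \<longrightarrow> und_adj E u v)"

definition clique_number :: "'a set \<Rightarrow> ('a \<times> 'a) set \<Rightarrow> nat" where
  "clique_number V E = Max {card K | K. is_clique V E K}"

definition induces_acyclic :: "('a \<times> 'a) set \<Rightarrow> 'a set \<Rightarrow> bool" where
  "induces_acyclic E S \<longleftrightarrow> acyclic (E \<inter> (S \<times> S))"

definition dicoloring :: "'a set \<Rightarrow> ('a \<times> 'a) set \<Rightarrow> nat \<Rightarrow> ('a \<Rightarrow> nat) \<Rightarrow> bool" where
  "dicoloring V E k f \<longleftrightarrow> (\<forall>v\<in>V. f v \<in> {1..k})
     \<and> (\<forall>c\<in>{1..k}. induces_acyclic E {v\<in>V. f v = c})"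

definition dichromatic_number :: "'a set \<Rightarrow> ('a \<times> 'a) set \<Rightarrow> nat" where
  "dichromatic_number V E = (LEAST k. \<exists>f. dicoloring V E k f)"

definition induced_dicycle :: "'a set \<Rightarrow> ('a \<times> 'a) set \<Rightarrow> 'a list \<Rightarrow> bool" where
  "induced_dicycle V E vs \<longleftrightarrow> length vs \<ge> 2 \<and> distinct vs \<and> set vs \<subseteq> V
     \<and> E \<inter> (set vs \<times> set vs) =
        {(vs ! i, vs ! ((i + 1) mod length vs)) | i. i < length vs}"

end

theory Submission
  imports Defs "HOL-Library.Nat_Bijection"
begin

text \<open>The digraph is a directed shift graph: its vertices are the triples \<open>a < b < c < N\<close>,
  with an arc from \<open>(a, b, c)\<close> to its shift \<open>(b, c, d)\<close> and an arc from \<open>(c, d, e)\<close> back to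
  \<open>(a, b, c)\<close>. Ordering the triples in a clique by their first entry, all but the first
  start at the second or third entry of the first one, so cliques have at most three vertices.
  On an induced directed cycle, the vertex with smallest last entry is followed by two shifts,
  and the third vertex then has an arc back to it; so every induced directed cycle is a triangle.
  Finally, a counting argument over the sets of colours seen to the left of a pair \<open>i < j\<close> shows
  that for \<open>N > 2^(4^k)\<close> every colouring of the triples with \<open>k\<close> colours has a monochromatic
  path \<open>(a, b, c), (b, c, d), (c, d, e)\<close>, which closes to a monochromatic directed triangle.\<close>

lemma dicoloring_exists:
  fixes V :: "nat set"
  assumes "finite V" and loopless: "\<And>v. (v, v) \<notin> E"
  shows "\<exists>k f. dicoloring V E k f"
proof -
  have "dicoloring V E (Suc (Max (insert 0 V))) Suc"
    unfolding dicoloring_def induces_acyclic_def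
  proof (intro conjI ballI)
    fix c
    have "E \<inter> ({v \<in> V. Suc v = c} \<times> {v \<in> V. Suc v = c}) = {}"
      using loopless by auto
    then show "acyclic (E \<inter> ({v \<in> V. Suc v = c} \<times> {v \<in> V. Suc v = c}))"
      by (simp add: acyclic_def)
  qed (use \<open>finite V\<close> in auto)
  then show ?thesis by blast
qed

lemma dichromatic_number_geI:
  assumes "\<exists>k f. dicoloring V E k f"
    and "\<And>k f. dicoloring V E k f \<Longrightarrow> n \<le> k"
  shows "n \<le> dichromatic_number V E"
proof -
  have "\<exists>f. dicoloring V E (dichromatic_number V E) f"
    unfolding dichromatic_number_def using assms(1) by (rule LeastI_ex)
  then show ?thesis using assms(2) by blast
qed

lemma dicoloring_no_monochromatic_triangle:
  assumes "dicoloring V E k f"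
    and "x \<in> V" "y \<in> V" "z \<in> V" "(x, y) \<in> E" "(y, z) \<in> E" "(z, x) \<in> E"
    and "f x = f y" "f y = f z"
  shows False
proof -
  define S where "S = {v \<in> V. f v = f x}"
  have "acyclic (E \<inter> (S \<times> S))"
    using assms(1,2) by (auto simp: dicoloring_def induces_acyclic_def S_def)
  moreover have "(x, y) \<in> E \<inter> (S \<times> S)" "(y, z) \<in> E \<inter> (S \<times> S)" "(z, x) \<in> E \<inter> (S \<times> S)"
    using assms(2-) by (auto simp: S_def)
  then have "(x, x) \<in> (E \<inter> (S \<times> S))\<^sup>+"
    by (meson trancl.r_into_trancl trancl_into_trancl)
  ultimately show False by (simp add: acyclic_def)
qed

lemma clique_number_leI:
  assumes "\<And>K. is_clique V E K \<Longrightarrow> card K \<le> k"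
  shows "clique_number V E \<le> k"
proof -
  have "{card K | K. is_clique V E K} \<subseteq> {..k}"
    using assms by auto
  moreover have "is_clique V E {}"
    by (simp add: is_clique_def)
  then have "0 \<in> {card K | K. is_clique V E K}"
    by force
  ultimately show ?thesis
    unfolding clique_number_def by (subst Max_le_iff) (auto intro: finite_subset)
qed

lemma induced_dicycle_arc_iff:
  assumes cyc: "induced_dicycle V E vs" and "i < length vs" "j < length vs"
  shows "(vs ! i, vs ! j) \<in> E \<longleftrightarrow> j = Suc i mod length vs"
proof -
  let ?L = "length vs"
  have "(vs ! i, vs ! j) \<in> E \<longleftrightarrow> (vs ! i, vs ! j) \<in> E \<inter> (set vs \<times> set vs)"
    using assms by simp
  also have "\<dots> \<longleftrightarrow> (\<exists>i'<?L. vs ! i = vs ! i' \<and> vs ! j = vs ! (Suc i' mod ?L))"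
    using cyc unfolding induced_dicycle_def by auto
  also have "\<dots> \<longleftrightarrow> j = Suc i mod ?L"
  proof -
    have "Suc i mod ?L < ?L" using assms(2) by (metis gr_implies_not0 mod_less_divisor neq0_conv)
    then show ?thesis
      using assms cyc by (auto simp: induced_dicycle_def nth_eq_iff_index_eq)
  qed
  finally show ?thesis .
qed

lemma induced_dicycle_with_triangle:
  assumes cyc: "induced_dicycle V E vs" and i: "i < length vs"
    and closing: "(vs ! (Suc (Suc i) mod length vs), vs ! i) \<in> E"
  shows "length vs = 3"
proof -
  let ?L = "length vs"
  have "Suc (Suc i) mod ?L < ?L" using i by (metis gr_implies_not0 mod_less_divisor neq0_conv)
  then have "i = Suc (Suc (Suc i) mod ?L) mod ?L"
    using induced_dicycle_arc_iff[OF cyc _ i] closing by blast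
  also have "\<dots> = (i + 3) mod ?L"
    by (simp add: mod_Suc_eq numeral_3_eq_3)
  finally have "i = (i + 3) mod ?L" .
  then have "(i + 3) div ?L * ?L + i = i + 3"
    using div_mult_mod_eq[of "i + 3" ?L] by simp
  then have "?L dvd 3"
    by (metis add_right_cancel add.commute dvd_triv_right)
  moreover have "?L \<ge> 2" using cyc by (simp add: induced_dicycle_def)
  ultimately show ?thesis
    using dvd_imp_le[of ?L 3] by (cases "?L = 2") auto
qed

definition left_colours :: "(nat \<Rightarrow> nat \<Rightarrow> nat \<Rightarrow> 'c) \<Rightarrow> nat \<Rightarrow> nat \<Rightarrow> 'c set" where
  "left_colours g i j = {g h i j | h. h < i}"

definition repeated_left_colours :: "(nat \<Rightarrow> nat \<Rightarrow> nat \<Rightarrow> 'c) \<Rightarrow> nat \<Rightarrow> nat \<Rightarrow> 'c set" where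
  "repeated_left_colours g i j = {g h i j | h. h < i \<and> g h i j \<in> left_colours g h i}"

lemma equal_left_colours_imp_monochromatic_path:
  assumes "i < j" "j < l"
    and left: "left_colours g i j = left_colours g j l"
    and repeated: "repeated_left_colours g i j = repeated_left_colours g j l"
  shows "\<exists>a b. a < b \<and> b < i \<and> g a b i = g b i j \<and> g b i j = g i j l"
proof -
  have "g i j l \<in> left_colours g i j"
    using assms(1) left by (auto simp: left_colours_def)
  then have "g i j l \<in> repeated_left_colours g i j"
    using assms(1) repeated unfolding repeated_left_colours_def by blast
  then obtain b where b: "b < i" "g b i j = g i j l" "g b i j \<in> left_colours g b i"
    by (auto simp: repeated_left_colours_def)
  then obtain a where "a < b" "g a b i = g b i j"
    by (auto simp: left_colours_def)
  with b show ?thesis by metis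
qed

lemma monochromatic_triple_path:
  fixes g :: "nat \<Rightarrow> nat \<Rightarrow> nat \<Rightarrow> 'c"
  assumes colours: "\<And>a b c. a < b \<Longrightarrow> b < c \<Longrightarrow> c < N \<Longrightarrow> g a b c \<in> C"
    and "finite C" and large: "2 ^ (2 ^ card C * 2 ^ card C) < N"
  shows "\<exists>a b c d e. a < b \<and> b < c \<and> c < d \<and> d < e \<and> e < N
           \<and> g a b c = g b c d \<and> g b c d = g c d e"
proof (rule ccontr)
  assume no_path: "\<not> ?thesis"
  define sig where "sig i j = (left_colours g i j, repeated_left_colours g i j)" for i j
  define S where "S i = sig i ` {j. i < j \<and> j < N}" for i
  have "S i \<noteq> S j" if ij: "i < j" "j < N" for i j
  proof
    assume "S i = S j"
    then have "sig i j \<in> S j" using ij by (auto simp: S_def)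
    then obtain l where "j < l" "l < N" "sig i j = sig j l" by (auto simp: S_def)
    then obtain a b where "a < b" "b < i" "g a b i = g b i j" "g b i j = g i j l"
      using equal_left_colours_imp_monochromatic_path[of i j l g] ij by (auto simp: sig_def)
    then show False
      using no_path \<open>i < j\<close> \<open>j < l\<close> \<open>l < N\<close> by blast
  qed
  then have "inj_on S {..<N}"
    by (metis inj_onI lessThan_iff linorder_neqE_nat)
  moreover have "S ` {..<N} \<subseteq> Pow (Pow C \<times> Pow C)"
    using colours by (fastforce simp: S_def sig_def left_colours_def repeated_left_colours_def)
  ultimately have "card {..<N} \<le> card (Pow (Pow C \<times> Pow C))"
    by (intro card_inj_on_le) (simp_all add: \<open>finite C\<close>)
  also have "\<dots> = 2 ^ (2 ^ card C * 2 ^ card C)"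
    by (simp add: card_Pow card_cartesian_product \<open>finite C\<close>)
  finally show False using large by simp
qed

text \<open>The theorem asks for a vertex set of naturals, so triples are coded by \<open>prod_encode\<close>.\<close>

definition triple :: "nat \<Rightarrow> nat \<Rightarrow> nat \<Rightarrow> nat" where
  "triple a b c = prod_encode (a, prod_encode (b, c))"

definition entry1 :: "nat \<Rightarrow> nat" where "entry1 u = fst (prod_decode u)"
definition entry2 :: "nat \<Rightarrow> nat" where "entry2 u = fst (prod_decode (snd (prod_decode u)))"
definition entry3 :: "nat \<Rightarrow> nat" where "entry3 u = snd (prod_decode (snd (prod_decode u)))"

lemma entries_triple [simp]:
  "entry1 (triple a b c) = a" "entry2 (triple a b c) = b" "entry3 (triple a b c) = c"
  by (simp_all add: triple_def entry1_def entry2_def entry3_def)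

definition shift_vertices :: "nat \<Rightarrow> nat set" where
  "shift_vertices N = {triple a b c | a b c. a < b \<and> b < c \<and> c < N}"

definition shift_arcs :: "nat \<Rightarrow> (nat \<times> nat) set" where
  "shift_arcs N = {(u, v). u \<in> shift_vertices N \<and> v \<in> shift_vertices N
     \<and> ((entry1 v = entry2 u \<and> entry2 v = entry3 u) \<or> entry3 v = entry1 u)}"

lemma shift_vertex_entries:
  "u \<in> shift_vertices N \<Longrightarrow> entry1 u < entry2 u \<and> entry2 u < entry3 u \<and> entry3 u < N"
  by (auto simp: shift_vertices_def)

lemma triple_in_shift_vertices:
  "a < b \<Longrightarrow> b < c \<Longrightarrow> c < N \<Longrightarrow> triple a b c \<in> shift_vertices N"
  by (auto simp: shift_vertices_def)

lemma finite_shift_vertices: "finite (shift_vertices N)"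
proof -
  have "shift_vertices N \<subseteq> (\<lambda>(a, b, c). triple a b c) ` ({..<N} \<times> {..<N} \<times> {..<N})"
  proof
    fix u assume "u \<in> shift_vertices N"
    then obtain a b c where "u = triple a b c" "a < b" "b < c" "c < N"
      by (auto simp: shift_vertices_def)
    then show "u \<in> (\<lambda>(a, b, c). triple a b c) ` ({..<N} \<times> {..<N} \<times> {..<N})"
      by (intro image_eqI[where x="(a, b, c)"]) auto
  qed
  then show ?thesis by (rule finite_subset) auto
qed

lemma simple_digraph_shift: "simple_digraph (shift_vertices N) (shift_arcs N)"
  unfolding simple_digraph_def
proof (intro conjI allI impI)
  fix u v assume "(u, v) \<in> shift_arcs N"
  then show "(v, u) \<notin> shift_arcs N"
    using shift_vertex_entries[of u N] shift_vertex_entries[of v N]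
    unfolding shift_arcs_def by auto
qed (auto simp: shift_arcs_def dest: shift_vertex_entries)

lemma shift_adjacent_entries:
  assumes "und_adj (shift_arcs N) u v"
  shows "(entry1 u < entry1 v \<and> (entry1 v = entry2 u \<or> entry1 v = entry3 u))
       \<or> (entry1 v < entry1 u \<and> (entry1 u = entry2 v \<or> entry1 u = entry3 v))"
  using assms shift_vertex_entries[of u N] shift_vertex_entries[of v N]
  unfolding und_adj_def shift_arcs_def by auto

lemma shift_clique_card_le_3:
  assumes clique: "is_clique (shift_vertices N) (shift_arcs N) K"
  shows "card K \<le> 3"
proof (cases "K = {}")
  case False
  have "finite K"
    using clique finite_shift_vertices by (auto simp: is_clique_def intro: finite_subset)
  obtain m where m: "m \<in> K" and m_least: "\<And>v. v \<in> K \<Longrightarrow> entry1 m \<le> entry1 v"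
    using ex_has_least_nat[of "\<lambda>v. v \<in> K" _ entry1] False by blast
  have adj: "und_adj (shift_arcs N) u v" if "u \<in> K" "v \<in> K" "u \<noteq> v" for u v
    using clique that by (auto simp: is_clique_def)
  have "inj_on entry1 (K - {m})"
    by (rule inj_onI) (use shift_adjacent_entries[OF adj] in fastforce)
  moreover have "entry1 ` (K - {m}) \<subseteq> {entry2 m, entry3 m}"
    using shift_adjacent_entries[OF adj[OF m]] m_least by fastforce
  ultimately have "card (K - {m}) \<le> card {entry2 m, entry3 m}"
    by (intro card_inj_on_le) auto
  also have "\<dots> \<le> 2"
    by (simp add: card_insert_le_m1)
  finally show ?thesis
    using \<open>finite K\<close> m by (simp add: card_Diff_singleton_if)
qed simp

lemma shift_induced_dicycle_length:
  assumes cyc: "induced_dicycle (shift_vertices N) (shift_arcs N) vs"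
  shows "length vs = 3"
proof -
  let ?L = "length vs"
  have L: "?L \<ge> 2" and on_shift: "set vs \<subseteq> shift_vertices N"
    using cyc by (auto simp: induced_dicycle_def)
  obtain i where i: "i < ?L" and least: "\<And>j. j < ?L \<Longrightarrow> entry3 (vs ! i) \<le> entry3 (vs ! j)"
    using ex_has_least_nat[of "\<lambda>j. j < ?L" 0 "\<lambda>j. entry3 (vs ! j)"] L by fastforce
  define i1 where "i1 = Suc i mod ?L"
  define i2 where "i2 = Suc (Suc i) mod ?L"
  have L_pos: "0 < ?L" using L by linarith
  have i1: "i1 < ?L" and i2: "i2 < ?L" and i2_succ: "i2 = Suc i1 mod ?L"
    unfolding i1_def i2_def using mod_less_divisor[OF L_pos] by (simp_all add: mod_Suc_eq)
  define m x y where "m = vs ! i" and "x = vs ! i1" and "y = vs ! i2"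
  have shift_V: "m \<in> shift_vertices N" "x \<in> shift_vertices N" "y \<in> shift_vertices N"
    using on_shift i i1 i2 by (auto simp: m_def x_def y_def)
  note entries = shift_vertex_entries[OF shift_V(1)] shift_vertex_entries[OF shift_V(2)]
    shift_vertex_entries[OF shift_V(3)]
  have "(m, x) \<in> shift_arcs N" "(x, y) \<in> shift_arcs N"
    using induced_dicycle_arc_iff[OF cyc] i i1 i2 i2_succ by (auto simp: m_def x_def y_def i1_def)
  moreover have "entry3 m \<le> entry3 x" "entry3 m \<le> entry3 y"
    using least i1 i2 by (auto simp: m_def x_def y_def)
  \<comment> \<open>minimality of \<open>entry3 m\<close> rules out the backward arcs, so both arcs are shifts\<close>
  ultimately have "entry1 y = entry3 m"
    using entries by (auto simp: shift_arcs_def)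
  then have "(y, m) \<in> shift_arcs N"
    using shift_V by (auto simp: shift_arcs_def)
  then show ?thesis
    using induced_dicycle_with_triangle[OF cyc i] by (simp add: m_def y_def i2_def)
qed

lemma shift_dicoloring_colours:
  assumes col: "dicoloring (shift_vertices N) (shift_arcs N) k f"
  shows "N \<le> 2 ^ (2 ^ k * 2 ^ k)"
proof (rule ccontr)
  assume "\<not> ?thesis"
  then have large: "2 ^ (2 ^ card {1..k} * 2 ^ card {1..k}) < N" by simp
  define g where "g a b c = f (triple a b c)" for a b c
  have "g a b c \<in> {1..k}" if "a < b" "b < c" "c < N" for a b c
    using col triple_in_shift_vertices[OF that] by (auto simp: dicoloring_def g_def)
  then obtain a b c d e where path: "a < b" "b < c" "c < d" "d < e" "e < N"
    and mono: "g a b c = g b c d" "g b c d = g c d e"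
    using monochromatic_triple_path[of N g "{1..k}"] large by auto
  have "triple a b c \<in> shift_vertices N" "triple b c d \<in> shift_vertices N"
    "triple c d e \<in> shift_vertices N"
    using path by (auto intro: triple_in_shift_vertices)
  moreover from this have "(triple a b c, triple b c d) \<in> shift_arcs N"
    "(triple b c d, triple c d e) \<in> shift_arcs N" "(triple c d e, triple a b c) \<in> shift_arcs N"
    by (auto simp: shift_arcs_def)
  ultimately show False
    using dicoloring_no_monochromatic_triangle[OF col] mono by (simp add: g_def)
qed

lemma dichromatic_number_shift:
  assumes "2 ^ (2 ^ n * 2 ^ n) < N"
  shows "n \<le> dichromatic_number (shift_vertices N) (shift_arcs N)"
proof (rule dichromatic_number_geI)
  show "\<exists>k f. dicoloring (shift_vertices N) (shift_arcs N) k f"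
    using dicoloring_exists finite_shift_vertices simple_digraph_shift
    by (metis simple_digraph_def)
next
  fix k f assume "dicoloring (shift_vertices N) (shift_arcs N) k f"
  then have "(2::nat) ^ (2 ^ n * 2 ^ n) < 2 ^ (2 ^ k * 2 ^ k)"
    using shift_dicoloring_colours assms by (blast intro: less_le_trans)
  then have "(2::nat) ^ (n + n) < 2 ^ (k + k)"
    by (simp only: power_strict_increasing_iff one_less_numeral_iff semiring_norm(76) power_add)
  then show "n \<le> k"
    by simp
qed

theorem theorem1p5:
  fixes n :: nat
  shows "\<exists>(V :: nat set) E. finite V \<and> simple_digraph V E
           \<and> dichromatic_number V E \<ge> n \<and> clique_number V E \<le> 3
           \<and> \<not> (\<exists>vs. induced_dicycle V E vs \<and> odd (length vs) \<and> length vs \<ge> 5)"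
proof -
  define N :: nat where "N = Suc (2 ^ (2 ^ n * 2 ^ n))"
  have "n \<le> dichromatic_number (shift_vertices N) (shift_arcs N)"
    by (rule dichromatic_number_shift) (simp add: N_def)
  moreover have "clique_number (shift_vertices N) (shift_arcs N) \<le> 3"
    using clique_number_leI shift_clique_card_le_3 by blast
  moreover have "\<not> (\<exists>vs. induced_dicycle (shift_vertices N) (shift_arcs N) vs \<and> length vs \<ge> 5)"
    using shift_induced_dicycle_length by fastforce
  ultimately show ?thesis
    using finite_shift_vertices simple_digraph_shift by blast
qed

end
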